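(* Let $K,A,B$ be sets and let $\mathrm{null}$ be an element not in $A\cup B$. Let $S$ be the set of finite sets $s$ of triples $(k,a,b)$ with $k\in K$, $a\in A\cup\{\mathrm{null}\}$, $b\in B\cup\{\mathrm{null}\}$, such that no two distinct triples of $s$ have the same first component and no triple has $a=b=\mathrm{null}$. Let $V$ (resp. $W$) be the set of finite sets of pairs in $K\times A$ (resp. $K\times B$) in which no two distinct pairs have the same first component. Define $f:S\to V$, $f(s)=\{(k,a):(k,a,b)\in s,\ a\neq\mathrm{null}\}$ and $c:S\to W$, $c(s)=\{(k,b):(k,a,b)\in s,\ b\neq\mathrm{null}\}$. Then: (1) the map $s\mapsto (f(s),c(s))$ is a bijection $S\to V\times W$; (2) for every complete set $U$ of updates on $V$, setting $T(u)(s)$ to be the unique $s'\in S$ with $f(s')=u(f(s))$ and $c(s')=c(s)$ defines a translator $T$ for $f$; (3) for this $T$, $s\equiv s'$ implies $c(s)=c(s')$; and if moreover for all $x,y\in V$ there is $u\in U$ with $u(x)=y$, then $s\equiv s'$ if and only if $c(s)=c(s')$, so the classes of $S/{\equiv}$ are in one-to-one correspondence with $W$ (the states of the projection onto the $K$ and $B$ columns, restricted to non-null $B$).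
   Context: This models a table with key column $K$ and columns $A,B$, the view being the projection onto $(K,A)$ restricted to rows with non-null $A$. The translator $T$ in (2) corresponds to the row-level strategy: inserting $(k,a)$ in the view sets the $A$ column of the base row with key $k$ to $a$ if that row exists, and otherwise inserts $(k,a,\mathrm{null})$; deleting $(k,a)$ from the view sets the $A$ column of that base row to $\mathrm{null}$, deleting the base row if its $B$ column is also $\mathrm{null}$. Definitions: for a surjective map $f:S\to V$, a set $U$ of maps $V\to V$ is a complete set of updates if (a) $u,v\in U$ implies $v\circ u\in U$, and (b) for every $u\in U$ and $x\in V$ there is $w\in U$ with $w(u(x))=x$. A map $t:S\to S$ is a translation of $u:V\to V$ if $f\circ t=u\circ f$ and $u(f(s))=f(s)$ implies $t(s)=s$ for all $s\in S$. A translator for $f$ (with respect to a complete set $U$) assigns to each $u\in U$ a translation $T(u)$ of $u$ such that $T(u\circ v)=T(u)\circ T(v)$. The induced equivalence on $S$ is: $s\equiv s'$ iff $s=T(u)(s')$ for some $u\in U$. *)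

theory Defs
  imports Main "HOL-Library.FuncSet"
begin

definition Sset :: "'k set \<Rightarrow> 'v set \<Rightarrow> 'v set \<Rightarrow> 'v \<Rightarrow> ('k \<times> 'v \<times> 'v) set set" where
  "Sset K A B null = {s. finite s \<and> s \<subseteq> K \<times> (A \<union> {null}) \<times> (B \<union> {null})
      \<and> (\<forall>t\<in>s. \<forall>t'\<in>s. fst t = fst t' \<longrightarrow> t = t')
      \<and> (\<forall>(k,a,b)\<in>s. \<not> (a = null \<and> b = null))}"

definition Vset :: "'k set \<Rightarrow> 'v set \<Rightarrow> ('k \<times> 'v) set set" where
  "Vset K A = {x. finite x \<and> x \<subseteq> K \<times> A \<and> (\<forall>p\<in>x. \<forall>p'\<in>x. fst p = fst p' \<longrightarrow> p = p')}"

definition fmap :: "'v \<Rightarrow> ('k \<times> 'v \<times> 'v) set \<Rightarrow> ('k \<times> 'v) set" where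
  "fmap null s = {(k,a). \<exists>b. (k,a,b) \<in> s \<and> a \<noteq> null}"

definition cmap :: "'v \<Rightarrow> ('k \<times> 'v \<times> 'v) set \<Rightarrow> ('k \<times> 'v) set" where
  "cmap null s = {(k,b). \<exists>a. (k,a,b) \<in> s \<and> b \<noteq> null}"

text \<open>Maps X -> Y are represented as extensional functions (undefined off X).\<close>
definition complete_update_set :: "'x set \<Rightarrow> ('x \<Rightarrow> 'x) set \<Rightarrow> bool" where
  "complete_update_set V U \<longleftrightarrow> U \<subseteq> (V \<rightarrow>\<^sub>E V)
     \<and> (\<forall>u\<in>U. \<forall>v\<in>U. compose V v u \<in> U)
     \<and> (\<forall>u\<in>U. \<forall>x\<in>V. \<exists>w\<in>U. w (u x) = x)"

definition is_translation :: "'s set \<Rightarrow> ('s \<Rightarrow> 'x) \<Rightarrow> ('x \<Rightarrow> 'x) \<Rightarrow> ('s \<Rightarrow> 's) \<Rightarrow> bool" where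
  "is_translation S f u t \<longleftrightarrow> t \<in> (S \<rightarrow>\<^sub>E S)
     \<and> (\<forall>s\<in>S. f (t s) = u (f s))
     \<and> (\<forall>s\<in>S. u (f s) = f s \<longrightarrow> t s = s)"

definition is_translator :: "'s set \<Rightarrow> 'x set \<Rightarrow> ('s \<Rightarrow> 'x) \<Rightarrow> ('x \<Rightarrow> 'x) set
      \<Rightarrow> (('x \<Rightarrow> 'x) \<Rightarrow> ('s \<Rightarrow> 's)) \<Rightarrow> bool" where
  "is_translator S V f U T \<longleftrightarrow>
     (\<forall>u\<in>U. is_translation S f u (T u))
     \<and> (\<forall>u\<in>U. \<forall>v\<in>U. T (compose V u v) = compose S (T u) (T v))"

definition trans_equiv :: "'s set \<Rightarrow> ('x \<Rightarrow> 'x) set \<Rightarrow> (('x \<Rightarrow> 'x) \<Rightarrow> ('s \<Rightarrow> 's)) \<Rightarrow> ('s \<times> 's) set" where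
  "trans_equiv S U T = {(s, s'). s \<in> S \<and> s' \<in> S \<and> (\<exists>u\<in>U. s = T u s')}"

definition rowT :: "'k set \<Rightarrow> 'v set \<Rightarrow> 'v set \<Rightarrow> 'v
      \<Rightarrow> (('k \<times> 'v) set \<Rightarrow> ('k \<times> 'v) set) \<Rightarrow> ('k \<times> 'v \<times> 'v) set \<Rightarrow> ('k \<times> 'v \<times> 'v) set" where
  "rowT K A B null u = (\<lambda>s\<in>Sset K A B null.
      THE s'. s' \<in> Sset K A B null \<and> fmap null s' = u (fmap null s) \<and> cmap null s' = cmap null s)"

end

theory Submission
  imports Defs
begin

text \<open>A base state is the outer join, on the key, of its two projections, so
  s \<mapsto> (f s, c s) is a bijection onto V \<times> W whose inverse is the outer join. Thus c is a
  constant complement of f, and translating u while keeping c fixed is well defined, composes like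
  u, fixes every state whose view u fixes, and never changes c; only u mapping V into V is used,
  not the closure axioms of a complete set of updates. When U acts transitively on V, any two
  states with the same complement are related by a translated update, so the equivalence classes
  are exactly the fibres of c.\<close>

definition key_lookup :: "'v \<Rightarrow> ('k \<times> 'v) set \<Rightarrow> 'k \<Rightarrow> 'v" where
  "key_lookup null x k = (if k \<in> fst ` x then THE a. (k, a) \<in> x else null)"

definition outer_join :: "'v \<Rightarrow> ('k \<times> 'v) set \<Rightarrow> ('k \<times> 'v) set \<Rightarrow> ('k \<times> 'v \<times> 'v) set" where
  "outer_join null x y =
     (\<lambda>k. (k, key_lookup null x k, key_lookup null y k)) ` (fst ` x \<union> fst ` y)"

lemma key_lookup_eq:
  assumes "inj_on fst x" "(k, a) \<in> x"
  shows "key_lookup null x k = a"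
proof -
  have "(THE a'. (k, a') \<in> x) = a"
  proof (rule the_equality)
    show "(k, a) \<in> x" by fact
  next
    fix a' assume "(k, a') \<in> x"
    then show "a' = a"
      using inj_onD[OF assms(1) _ _ assms(2)] by fastforce
  qed
  then show ?thesis
    using assms(2) by (force simp: key_lookup_def)
qed

lemma key_lookup_notin: "k \<notin> fst ` x \<Longrightarrow> key_lookup null x k = null"
  by (simp add: key_lookup_def)

lemma Sset_iff:
  "s \<in> Sset K A B null \<longleftrightarrow> finite s \<and> s \<subseteq> K \<times> (A \<union> {null}) \<times> (B \<union> {null}) \<and> inj_on fst s
     \<and> (\<forall>(k, a, b)\<in>s. \<not> (a = null \<and> b = null))"
  by (auto simp: Sset_def inj_on_def)

lemma Vset_iff: "x \<in> Vset K A \<longleftrightarrow> finite x \<and> x \<subseteq> K \<times> A \<and> inj_on fst x"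
  by (auto simp: Vset_def inj_on_def)

lemma fmap_eq_image: "fmap null s = (\<lambda>(k, a, b). (k, a)) ` {t \<in> s. fst (snd t) \<noteq> null}"
  by (force simp: fmap_def)

lemma cmap_eq_image: "cmap null s = (\<lambda>(k, a, b). (k, b)) ` {t \<in> s. snd (snd t) \<noteq> null}"
  by (force simp: cmap_def)

lemma inj_on_fst_tripleD:
  "inj_on fst s \<Longrightarrow> (k, a, b) \<in> s \<Longrightarrow> (k, a', b') \<in> s \<Longrightarrow> a = a' \<and> b = b'"
  using inj_onD[of fst s "(k, a, b)" "(k, a', b')"] by simp

lemma inj_on_fst_fmap: "inj_on fst s \<Longrightarrow> inj_on fst (fmap null s)"
  by (rule inj_onI) (auto simp: fmap_def dest: inj_on_fst_tripleD)

lemma inj_on_fst_cmap: "inj_on fst s \<Longrightarrow> inj_on fst (cmap null s)"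
  by (rule inj_onI) (auto simp: cmap_def dest: inj_on_fst_tripleD)

lemma fmap_in_Vset: "s \<in> Sset K A B null \<Longrightarrow> fmap null s \<in> Vset K A"
  using inj_on_fst_fmap[of s null] unfolding Sset_iff Vset_iff by (auto simp: fmap_eq_image)

lemma cmap_in_Vset: "s \<in> Sset K A B null \<Longrightarrow> cmap null s \<in> Vset K B"
  using inj_on_fst_cmap[of s null] unfolding Sset_iff Vset_iff by (auto simp: cmap_eq_image)

lemma key_lookup_fmap:
  assumes "inj_on fst s" "(k, a, b) \<in> s"
  shows "key_lookup null (fmap null s) k = a"
proof (cases "a = null")
  case True
  have "k \<notin> fst ` fmap null s"
    using assms True by (auto simp: fmap_def dest: inj_on_fst_tripleD)
  then show ?thesis
    using True by (simp add: key_lookup_notin)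
next
  case False
  then show ?thesis
    using assms by (intro key_lookup_eq inj_on_fst_fmap) (auto simp: fmap_def)
qed

lemma key_lookup_cmap:
  assumes "inj_on fst s" "(k, a, b) \<in> s"
  shows "key_lookup null (cmap null s) k = b"
proof (cases "b = null")
  case True
  have "k \<notin> fst ` cmap null s"
    using assms True by (auto simp: cmap_def dest: inj_on_fst_tripleD)
  then show ?thesis
    using True by (simp add: key_lookup_notin)
next
  case False
  then show ?thesis
    using assms by (intro key_lookup_eq inj_on_fst_cmap) (auto simp: cmap_def)
qed

lemma outer_join_fmap_cmap:
  assumes "s \<in> Sset K A B null"
  shows "outer_join null (fmap null s) (cmap null s) = s"
proof -
  have inj: "inj_on fst s" and not_null: "\<forall>(k, a, b)\<in>s. \<not> (a = null \<and> b = null)"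
    using assms by (auto simp: Sset_iff)
  have keys: "fst ` fmap null s \<union> fst ` cmap null s = fst ` s"
  proof (intro equalityI subsetI)
    fix k assume "k \<in> fst ` s"
    then obtain a b where "(k, a, b) \<in> s"
      by force
    with not_null show "k \<in> fst ` fmap null s \<union> fst ` cmap null s"
      by (cases "a = null") (force simp: fmap_def cmap_def)+
  qed (force simp: fmap_def cmap_def)+
  have "(fst t, key_lookup null (fmap null s) (fst t), key_lookup null (cmap null s) (fst t)) = t"
    if "t \<in> s" for t
    using that key_lookup_fmap[OF inj] key_lookup_cmap[OF inj] by (cases t) simp
  then show ?thesis
    by (simp add: outer_join_def keys image_image)
qed

lemma mem_outer_join_iff:
  "(k, a, b) \<in> outer_join null x y \<longleftrightarrow>
     k \<in> fst ` x \<union> fst ` y \<and> a = key_lookup null x k \<and> b = key_lookup null y k"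
  by (auto simp: outer_join_def)

lemma key_lookup_non_null:
  assumes "inj_on fst x" "key_lookup null x k \<noteq> null"
  shows "(k, key_lookup null x k) \<in> x"
proof -
  have "k \<in> fst ` x"
    using assms(2) key_lookup_notin by metis
  then obtain a where "(k, a) \<in> x"
    by force
  then show ?thesis
    using key_lookup_eq[OF assms(1)] by simp
qed

lemma fmap_outer_join:
  assumes "inj_on fst x" "null \<notin> snd ` x"
  shows "fmap null (outer_join null x y) = x"
proof (intro set_eqI iffI)
  fix p assume "p \<in> fmap null (outer_join null x y)"
  then show "p \<in> x"
    using key_lookup_non_null[OF assms(1)] by (auto simp: fmap_def mem_outer_join_iff)
next
  fix p assume p: "p \<in> x"
  obtain k a where [simp]: "p = (k, a)" by fastforce
  have "a \<noteq> null" "key_lookup null x k = a"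
    using p assms by (force, simp add: key_lookup_eq)
  then show "p \<in> fmap null (outer_join null x y)"
    using p by (force simp: fmap_def mem_outer_join_iff)
qed

lemma cmap_outer_join:
  assumes "inj_on fst y" "null \<notin> snd ` y"
  shows "cmap null (outer_join null x y) = y"
proof (intro set_eqI iffI)
  fix p assume "p \<in> cmap null (outer_join null x y)"
  then show "p \<in> y"
    using key_lookup_non_null[OF assms(1)] by (auto simp: cmap_def mem_outer_join_iff)
next
  fix p assume p: "p \<in> y"
  obtain k b where [simp]: "p = (k, b)" by fastforce
  have "b \<noteq> null" "key_lookup null y k = b"
    using p assms by (force, simp add: key_lookup_eq)
  then show "p \<in> cmap null (outer_join null x y)"
    using p by (force simp: cmap_def mem_outer_join_iff)
qed

lemma key_lookup_in_Vset:
  assumes "x \<in> Vset K A" "k \<in> fst ` x"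
  shows "key_lookup null x k \<in> A"
  using assms by (force simp: Vset_iff key_lookup_eq)

lemma outer_join_in_Sset:
  assumes "null \<notin> A \<union> B" "x \<in> Vset K A" "y \<in> Vset K B"
  shows "outer_join null x y \<in> Sset K A B null"
  unfolding Sset_iff
proof (intro conjI)
  have lookups: "key_lookup null x k \<in> A \<union> {null}" "key_lookup null y k \<in> B \<union> {null}" for k
    by (cases "k \<in> fst ` x", simp_all add: key_lookup_in_Vset[OF assms(2)] key_lookup_notin)
      (cases "k \<in> fst ` y", simp_all add: key_lookup_in_Vset[OF assms(3)] key_lookup_notin)
  have keys: "fst ` x \<union> fst ` y \<subseteq> K" and "finite x" "finite y"
    using assms(2,3) by (auto simp: Vset_iff)
  then show "finite (outer_join null x y)"
    by (simp add: outer_join_def)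
  show "outer_join null x y \<subseteq> K \<times> (A \<union> {null}) \<times> (B \<union> {null})"
    using keys lookups by (auto simp: outer_join_def)
  show "inj_on fst (outer_join null x y)"
    by (rule inj_onI) (auto simp: outer_join_def)
  have "key_lookup null x k \<noteq> null \<or> key_lookup null y k \<noteq> null"
    if "k \<in> fst ` x \<union> fst ` y" for k
    using that assms(1) key_lookup_in_Vset[OF assms(2), where k = k and null = null]
      key_lookup_in_Vset[OF assms(3), where k = k and null = null]
    by force
  then show "\<forall>(k, a, b)\<in>outer_join null x y. \<not> (a = null \<and> b = null)"
    by (auto simp: outer_join_def)
qed

theorem bij_betw_fmap_cmap:
  assumes "null \<notin> A \<union> B"
  shows "bij_betw (\<lambda>s. (fmap null s, cmap null s)) (Sset K A B null) (Vset K A \<times> Vset K B)"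
proof -
  have "(fmap null (outer_join null x y), cmap null (outer_join null x y)) = (x, y)"
    if "x \<in> Vset K A" "y \<in> Vset K B" for x y
  proof -
    have "inj_on fst x" "null \<notin> snd ` x" "inj_on fst y" "null \<notin> snd ` y"
      using that assms by (auto simp: Vset_iff)
    then show ?thesis
      by (simp add: fmap_outer_join cmap_outer_join)
  qed
  then show ?thesis
    by (intro bij_betw_byWitness[where f' = "\<lambda>(x, y). outer_join null x y"])
      (auto simp: outer_join_fmap_cmap fmap_in_Vset cmap_in_Vset outer_join_in_Sset[OF assms])
qed

lemma bij_betw_quotient_the_elem:
  assumes "R \<subseteq> S \<times> S" "\<And>s s'. s \<in> S \<Longrightarrow> s' \<in> S \<Longrightarrow> (s, s') \<in> R \<longleftrightarrow> g s = g s'"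
  shows "bij_betw (\<lambda>C. the_elem (g ` C)) (S // R) (g ` S)"
proof -
  have R_class: "R `` {s} = {s' \<in> S. g s' = g s}" if "s \<in> S" for s
    using assms that by auto
  have g_class: "the_elem (g ` (R `` {s})) = g s" if "s \<in> S" for s
  proof -
    have "g ` (R `` {s}) = {g s}"
      using R_class that by auto
    then show ?thesis
      by simp
  qed
  have "inj_on (\<lambda>C. the_elem (g ` C)) (S // R)"
  proof (rule inj_onI)
    fix C D assume C: "C \<in> S // R" and D: "D \<in> S // R"
      and eq: "the_elem (g ` C) = the_elem (g ` D)"
    obtain s t where "s \<in> S" "C = R `` {s}" "t \<in> S" "D = R `` {t}"
      using C D by (auto elim!: quotientE)
    moreover from this eq have "g s = g t"
      by (simp add: g_class)
    ultimately show "C = D"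
      by (simp add: R_class)
  qed
  moreover have "(\<lambda>C. the_elem (g ` C)) ` (S // R) = g ` S"
    by (force elim!: quotientE intro: quotientI simp: g_class)
  ultimately show ?thesis
    by (simp add: bij_betw_def)
qed

locale constant_complement =
  fixes S :: "'s set" and V :: "'x set" and W :: "'w set"
    and f :: "'s \<Rightarrow> 'x" and c :: "'s \<Rightarrow> 'w"
  assumes bij: "bij_betw (\<lambda>s. (f s, c s)) S (V \<times> W)"
begin

definition translate :: "('x \<Rightarrow> 'x) \<Rightarrow> 's \<Rightarrow> 's" where
  "translate u = (\<lambda>s\<in>S. THE s'. s' \<in> S \<and> f s' = u (f s) \<and> c s' = c s)"

lemma f_mem: "s \<in> S \<Longrightarrow> f s \<in> V"
  and c_mem: "s \<in> S \<Longrightarrow> c s \<in> W"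
  using bij_betw_apply[OF bij] by auto

lemma state_eqI: "s \<in> S \<Longrightarrow> s' \<in> S \<Longrightarrow> f s = f s' \<Longrightarrow> c s = c s' \<Longrightarrow> s = s'"
  using bij_betw_imp_inj_on[OF bij] by (auto dest: inj_onD)

lemma ex1_state: "x \<in> V \<Longrightarrow> w \<in> W \<Longrightarrow> \<exists>!s. s \<in> S \<and> f s = x \<and> c s = w"
proof -
  assume "x \<in> V" "w \<in> W"
  then have "(x, w) \<in> (\<lambda>s. (f s, c s)) ` S"
    using bij_betw_imp_surj_on[OF bij] by blast
  then obtain s where s: "s \<in> S" "f s = x" "c s = w"
    by auto
  show ?thesis
  proof (rule ex1I[where a = s])
    fix s' assume "s' \<in> S \<and> f s' = x \<and> c s' = w"
    with s show "s' = s"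
      by (intro state_eqI) simp_all
  qed (simp add: s)
qed

lemma translate_in_fibre:
  assumes "s \<in> S" "u (f s) \<in> V"
  shows "translate u s \<in> S" "f (translate u s) = u (f s)" "c (translate u s) = c s"
proof -
  have "translate u s = (THE s'. s' \<in> S \<and> f s' = u (f s) \<and> c s' = c s)"
    using assms(1) by (simp add: translate_def)
  with theI'[OF ex1_state[OF assms(2) c_mem[OF assms(1)]]]
  show "translate u s \<in> S" "f (translate u s) = u (f s)" "c (translate u s) = c s"
    by simp_all
qed

lemma translate_eqI:
  assumes "s \<in> S" "s' \<in> S" "f s' = u (f s)" "c s' = c s"
  shows "translate u s = s'"
  using assms translate_in_fibre[of s u] f_mem[OF assms(2)] by (intro state_eqI) auto

lemma translate_in_fibre_Pi:
  assumes "U \<subseteq> V \<rightarrow> V" "u \<in> U" "s \<in> S"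
  shows "translate u s \<in> S" "f (translate u s) = u (f s)" "c (translate u s) = c s"
  using translate_in_fibre[where u = u, OF assms(3) funcset_mem[OF subsetD[OF assms(1,2)] f_mem[OF assms(3)]]]
  by simp_all

lemma is_translator_translate:
  assumes "U \<subseteq> V \<rightarrow> V"
  shows "is_translator S V f U translate"
  unfolding is_translator_def is_translation_def
proof (intro conjI ballI impI)
  fix u assume u: "u \<in> U"
  show "translate u \<in> S \<rightarrow>\<^sub>E S"
    using translate_in_fibre_Pi[OF assms u] by (simp add: translate_def)
  show "f (translate u s) = u (f s)" if "s \<in> S" for s
    using translate_in_fibre_Pi[OF assms u that] by simp
  show "translate u s = s" if "s \<in> S" "u (f s) = f s" for s
    using that by (intro translate_eqI) simp_all
next
  fix u v assume u: "u \<in> U" and v: "v \<in> U"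
  show "translate (compose V u v) = compose S (translate u) (translate v)"
  proof
    fix s show "translate (compose V u v) s = compose S (translate u) (translate v) s"
    proof (cases "s \<in> S")
      case True
      note vs = translate_in_fibre_Pi[OF assms v True]
      note uvs = translate_in_fibre_Pi[OF assms u vs(1)]
      have "translate (compose V u v) s = translate u (translate v s)"
        using True uvs vs f_mem[OF True] by (intro translate_eqI) (simp_all add: compose_def)
      then show ?thesis
        using True by (simp add: compose_def)
    qed (simp add: translate_def compose_def)
  qed
qed

lemma trans_equiv_translate_imp_eq:
  assumes "U \<subseteq> V \<rightarrow> V" "(s, s') \<in> trans_equiv S U translate"
  shows "c s = c s'"
  using assms(2) translate_in_fibre_Pi(3)[OF assms(1)] by (auto simp: trans_equiv_def)

lemma trans_equiv_translate_iff:
  assumes "U \<subseteq> V \<rightarrow> V" "\<forall>x\<in>V. \<forall>y\<in>V. \<exists>u\<in>U. u x = y" "s \<in> S" "s' \<in> S"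
  shows "(s, s') \<in> trans_equiv S U translate \<longleftrightarrow> c s = c s'"
proof
  assume "c s = c s'"
  moreover obtain u where "u \<in> U" "u (f s') = f s"
    using assms(2-4) f_mem by blast
  ultimately show "(s, s') \<in> trans_equiv S U translate"
    using assms(3,4) translate_eqI[of s' s u] by (auto simp: trans_equiv_def)
qed (use assms trans_equiv_translate_imp_eq in blast)

lemma c_image: "V \<noteq> {} \<Longrightarrow> c ` S = W"
  using ex1_state c_mem by blast

lemma bij_betw_quotient_translate:
  assumes "U \<subseteq> V \<rightarrow> V" "\<forall>x\<in>V. \<forall>y\<in>V. \<exists>u\<in>U. u x = y" "V \<noteq> {}"
  shows "bij_betw (\<lambda>C. the_elem (c ` C)) (S // trans_equiv S U translate) W"
  using bij_betw_quotient_the_elem[of "trans_equiv S U translate" S c]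
    trans_equiv_translate_iff[OF assms(1,2)] c_image[OF assms(3)]
  by (auto simp: trans_equiv_def)

end

lemma complete_update_set_imp_Pi: "complete_update_set V U \<Longrightarrow> U \<subseteq> V \<rightarrow> V"
  by (auto simp: complete_update_set_def PiE_def)

theorem mainTheorem4:
  fixes K :: "'k set" and A B :: "'v set" and null :: 'v
  assumes "null \<notin> A \<union> B"
  shows "bij_betw (\<lambda>s. (fmap null s, cmap null s)) (Sset K A B null) (Vset K A \<times> Vset K B)
    \<and> (\<forall>U. complete_update_set (Vset K A) U \<longrightarrow>
          is_translator (Sset K A B null) (Vset K A) (fmap null) U (rowT K A B null)
        \<and> (\<forall>s s'. (s, s') \<in> trans_equiv (Sset K A B null) U (rowT K A B null)
                  \<longrightarrow> cmap null s = cmap null s')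
        \<and> ((\<forall>x\<in>Vset K A. \<forall>y\<in>Vset K A. \<exists>u\<in>U. u x = y) \<longrightarrow>
             (\<forall>s\<in>Sset K A B null. \<forall>s'\<in>Sset K A B null.
                 (s, s') \<in> trans_equiv (Sset K A B null) U (rowT K A B null)
                 \<longleftrightarrow> cmap null s = cmap null s')
           \<and> bij_betw (\<lambda>C. the_elem (cmap null ` C))
               (Sset K A B null // trans_equiv (Sset K A B null) U (rowT K A B null))
               (Vset K B)))"
proof -
  interpret row: constant_complement "Sset K A B null" "Vset K A" "Vset K B" "fmap null" "cmap null"
    using bij_betw_fmap_cmap[OF assms] by unfold_locales
  have rowT_eq: "rowT K A B null = row.translate"
    by (simp add: fun_eq_iff rowT_def row.translate_def)
  have "Vset K A \<noteq> {}"
    by (auto simp: Vset_iff)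
  then show ?thesis
    unfolding rowT_eq
    using bij_betw_fmap_cmap[OF assms]
    by (simp add: complete_update_set_imp_Pi row.is_translator_translate row.trans_equiv_translate_iff
        row.bij_betw_quotient_translate)
      (blast dest: complete_update_set_imp_Pi row.trans_equiv_translate_imp_eq)
qed

end
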